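(* Let $a>0$, $g>0$, $l_{\mathrm{c}}>0$, $c_{\infty}>0$ and $c_{\mathrm{s}}\ge 0$ be constants. Consider pairs $(l_{\infty},c)$ with $l_{\infty}>0$ and $c$ continuously differentiable on $[0,l_{\infty})$ with left limit $c^-:=\lim_{x\nearrow l_{\infty}}c(x)$, satisfying \[ -a c'(x)-g c(x)=0\ (0<x<l_{\infty}),\qquad a c^-=g l_{\mathrm{c}} c_{\infty},\qquad c(0)=c_{\mathrm{s}} \] (steady-state solutions). Such a pair exists if and only if $c_{\mathrm{s}}>c_{\infty} g l_{\mathrm{c}}/a$, and in that case it is unique and given by \[ c(x)=c_{\mathrm{s}}\mathrm{e}^{-gx/a},\qquad l_{\infty}=\frac{a}{g}\log\frac{a c_{\mathrm{s}}}{g l_{\mathrm{c}} c_{\infty}}. \]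
   Context: This is the steady-state problem of a one-dimensional axonal growth model with no diffusion ($D=0$), in which the tubulin concentration along the axon is not required to be continuous at the axon tip $x=l_{\infty}$ (the growth cone concentration is $c_{\infty}$, while $c^-$ is the concentration just inside the axon). Here $a$ is the active transport velocity, $g$ the degradation rate, $l_{\mathrm{c}}$ the characteristic growth-cone length, $c_{\mathrm{s}}$ the soma concentration, and $l_{\infty}$ the axon length. *)

theory Defs
  imports "HOL-Analysis.Analysis"
begin

definition steady_state ::
  "real \<Rightarrow> real \<Rightarrow> real \<Rightarrow> real \<Rightarrow> real \<Rightarrow> real \<Rightarrow> (real \<Rightarrow> real) \<Rightarrow> bool" where
  "steady_state a g lc cinf cs l c \<longleftrightarrow>
     l > 0 \<and>
     (\<exists>c'. continuous_on {0..<l} c' \<and>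
           (\<forall>x\<in>{0..<l}. (c has_real_derivative c' x) (at x within {0..<l})) \<and>
           (\<forall>x\<in>{0<..<l}. - a * c' x - g * c x = 0)) \<and>
     (\<exists>cm. (c \<longlongrightarrow> cm) (at_left l) \<and> a * cm = g * lc * cinf) \<and>
     c 0 = cs"

end

theory Submission
  imports Defs
begin

text \<open>The ODE forces \<open>c x = c\<^sub>s e\<^sup>-\<^sup>g\<^sup>x\<^sup>/\<^sup>a\<close> on \<open>[0, l)\<close>, so
  \<open>c\<^sup>- = c\<^sub>s e\<^sup>-\<^sup>g\<^sup>l\<^sup>/\<^sup>a\<close> and the flux condition becomes
  \<open>e\<^sup>g\<^sup>l\<^sup>/\<^sup>a = a c\<^sub>s / (g l\<^sub>c c\<^sub>\<infinity>)\<close>. This has a solution \<open>l > 0\<close> exactly when the right-hand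
  side exceeds 1, and then \<open>l\<close> is its logarithm scaled by \<open>a/g\<close>.\<close>

lemma linear_ode_solution_unique:
  fixes c c' :: "real \<Rightarrow> real" and k l x :: real
  assumes deriv: "\<forall>x\<in>{0..<l}. (c has_real_derivative c' x) (at x within {0..<l})"
    and ode: "\<forall>x\<in>{0<..<l}. c' x = k * c x"
    and x: "x \<in> {0..<l}"
  shows "c x = c 0 * exp (k * x)"
proof (cases "x = 0")
  case True
  then show ?thesis by simp
next
  case False
  with x have x0: "0 < x" "x < l" by auto
  define h where "h t = c t * exp (- k * t)" for t
  have "continuous_on {0..<l} c"
    unfolding continuous_on_eq_continuous_within
    using deriv by (metis has_derivative_continuous has_field_derivative_def)
  then have "continuous_on {0..x} c"
    by (rule continuous_on_subset) (use x0 in auto)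
  then have h_cont: "continuous_on {0..x} h"
    unfolding h_def by (intro continuous_intros)
  have h_deriv: "(h has_real_derivative 0) (at t)" if t: "0 < t" "t < x" for t
  proof -
    have "t \<in> interior {0..<l}" using t x0 by auto
    moreover have "(c has_real_derivative c' t) (at t within {0..<l})"
      using deriv t x0 by simp
    ultimately have "(c has_real_derivative c' t) (at t)"
      by (metis at_within_interior)
    then have "(h has_real_derivative c' t * exp (- k * t) + c t * (exp (- k * t) * - k)) (at t)"
      unfolding h_def by (auto intro!: derivative_eq_intros)
    moreover have "c' t = k * c t" using ode t x0 by simp
    ultimately show ?thesis by (simp add: algebra_simps)
  qed
  have "h x = h 0" by (rule DERIV_isconst_end[OF x0(1) h_cont h_deriv])
  then show ?thesis
    unfolding h_def by (simp add: exp_minus field_simps)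
qed

lemma tendsto_at_left_if_eq_on:
  fixes c f :: "real \<Rightarrow> real"
  assumes "u < l" "\<forall>x\<in>{u..<l}. c x = f x" "isCont f l"
  shows "(c \<longlongrightarrow> f l) (at_left l)"
proof -
  have "\<forall>\<^sub>F x in at_left l. f x = c x"
    using eventually_at_left_real[OF \<open>u < l\<close>] by eventually_elim (use assms(2) in auto)
  moreover have "(f \<longlongrightarrow> f l) (at_left l)"
    using \<open>isCont f l\<close> by (simp add: isCont_def filterlim_at_split)
  ultimately show ?thesis using Lim_transform_eventually by blast
qed

lemma steady_state_iff_exponential_profile:
  fixes a g lc cinf cs l :: real and c :: "real \<Rightarrow> real"
  assumes "a > 0"
  shows "steady_state a g lc cinf cs l c \<longleftrightarrow>
           l > 0 \<and> (\<forall>x\<in>{0..<l}. c x = cs * exp (- g * x / a)) \<and>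
           a * (cs * exp (- g * l / a)) = g * lc * cinf"
    (is "_ \<longleftrightarrow> _ \<and> ?profile \<and> ?flux")
proof
  assume ss: "steady_state a g lc cinf cs l c"
  then have l0: "l > 0" and c0: "c 0 = cs" unfolding steady_state_def by auto
  from ss obtain c' where deriv: "\<forall>x\<in>{0..<l}. (c has_real_derivative c' x) (at x within {0..<l})"
    and ode: "\<forall>x\<in>{0<..<l}. - a * c' x - g * c x = 0"
    unfolding steady_state_def by blast
  from ss obtain cm where lim: "(c \<longlongrightarrow> cm) (at_left l)" and flux: "a * cm = g * lc * cinf"
    unfolding steady_state_def by blast
  have rate: "\<forall>x\<in>{0<..<l}. c' x = - g / a * c x"
    using ode \<open>a > 0\<close> by (auto simp: field_simps)
  have profile: ?profile
  proof
    fix x assume "x \<in> {0..<l}"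
    then have "c x = c 0 * exp (- g / a * x)"
      by (rule linear_ode_solution_unique[OF deriv rate])
    then show "c x = cs * exp (- g * x / a)" using c0 by simp
  qed
  then have "(c \<longlongrightarrow> cs * exp (- g * l / a)) (at_left l)"
    using l0 \<open>a > 0\<close> by (intro tendsto_at_left_if_eq_on[where u = 0]) (auto intro!: continuous_intros)
  with lim have "cm = cs * exp (- g * l / a)"
    using tendsto_unique[OF trivial_limit_at_left_real] by blast
  with l0 profile flux show "l > 0 \<and> ?profile \<and> ?flux" by simp
next
  assume "l > 0 \<and> ?profile \<and> ?flux"
  then have l0: "l > 0" and profile: ?profile and flux: ?flux by auto
  define c' where "c' x = - g / a * (cs * exp (- g * x / a))" for x
  have deriv: "(c has_real_derivative c' x) (at x within {0..<l})" if "x \<in> {0..<l}" for x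
  proof -
    have "((\<lambda>x. cs * exp (- g * x / a)) has_real_derivative c' x) (at x within {0..<l})"
      unfolding c'_def using \<open>a > 0\<close> by (auto intro!: derivative_eq_intros)
    then show ?thesis
      by (rule has_field_derivative_transform_within[of _ _ _ _ 1]) (use that profile in auto)
  qed
  have "continuous_on {0..<l} c'"
    unfolding c'_def using \<open>a > 0\<close> by (auto intro!: continuous_intros)
  moreover have "\<forall>x\<in>{0<..<l}. - a * c' x - g * c x = 0"
    using profile \<open>a > 0\<close> unfolding c'_def by auto
  moreover have "(c \<longlongrightarrow> cs * exp (- g * l / a)) (at_left l)"
    using l0 profile \<open>a > 0\<close> by (intro tendsto_at_left_if_eq_on[where u = 0]) (auto intro!: continuous_intros)
  moreover have "c 0 = cs" using profile l0 by auto
  ultimately show "steady_state a g lc cinf cs l c"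
    unfolding steady_state_def using l0 deriv flux
    by (intro conjI exI[of _ c'] exI[of _ "cs * exp (- g * l / a)"]) auto
qed

lemma exponential_flux_condition_iff:
  fixes a g lc cinf cs l :: real
  assumes "a > 0" "g > 0" "lc > 0" "cinf > 0" "l > 0"
  shows "a * (cs * exp (- g * l / a)) = g * lc * cinf \<longleftrightarrow>
           cs > cinf * g * lc / a \<and> l = a / g * ln (a * cs / (g * lc * cinf))"
proof -
  have "a * (cs * exp (- g * l / a)) = g * lc * cinf \<longleftrightarrow>
          exp (g * l / a) = a * cs / (g * lc * cinf)"
    using assms by (auto simp: exp_minus field_simps)
  also have "\<dots> \<longleftrightarrow> a * cs / (g * lc * cinf) > 1 \<and> g * l / a = ln (a * cs / (g * lc * cinf))"
  proof -
    have exp_eq_iff: "exp y = r \<longleftrightarrow> r > 1 \<and> y = ln r" if "y > 0" for y r :: real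
      using that by auto
    have "g * l / a > 0" using assms by simp
    then show ?thesis by (rule exp_eq_iff)
  qed
  also have "\<dots> \<longleftrightarrow> cs > cinf * g * lc / a \<and> l = a / g * ln (a * cs / (g * lc * cinf))"
    using assms by (auto simp: field_simps)
  finally show ?thesis .
qed

theorem theorem4:
  fixes a g lc cinf cs :: real
  assumes "a > 0" "g > 0" "lc > 0" "cinf > 0" "cs \<ge> 0"
  shows "((\<exists>l c. steady_state a g lc cinf cs l c) \<longleftrightarrow> cs > cinf * g * lc / a) \<and>
         (cs > cinf * g * lc / a \<longrightarrow>
            (\<forall>l c. steady_state a g lc cinf cs l c \<longleftrightarrow>
               (l = a / g * ln (a * cs / (g * lc * cinf)) \<and>
                (\<forall>x\<in>{0..<l}. c x = cs * exp (- g * x / a)))))"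
proof -
  define L where "L = a / g * ln (a * cs / (g * lc * cinf))"
  have char: "steady_state a g lc cinf cs l c \<longleftrightarrow>
                l > 0 \<and> cs > cinf * g * lc / a \<and> l = L \<and> (\<forall>x\<in>{0..<l}. c x = cs * exp (- g * x / a))"
    for l c
    using steady_state_iff_exponential_profile[OF assms(1)] exponential_flux_condition_iff[OF assms(1-4)]
    unfolding L_def by blast
  have L_pos: "L > 0" if "cs > cinf * g * lc / a"
  proof -
    have "a * cs / (g * lc * cinf) > 1" using that assms by (simp add: field_simps)
    then have "ln (a * cs / (g * lc * cinf)) > 0" by simp
    then show ?thesis unfolding L_def using assms by simp
  qed
  have "(\<exists>l c. steady_state a g lc cinf cs l c) \<longleftrightarrow> cs > cinf * g * lc / a"
  proof
    assume "\<exists>l c. steady_state a g lc cinf cs l c"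
    then show "cs > cinf * g * lc / a" using char by blast
  next
    assume "cs > cinf * g * lc / a"
    then have "steady_state a g lc cinf cs L (\<lambda>x. cs * exp (- g * x / a))"
      using char L_pos by simp
    then show "\<exists>l c. steady_state a g lc cinf cs l c" by blast
  qed
  moreover have "steady_state a g lc cinf cs l c \<longleftrightarrow> l = L \<and> (\<forall>x\<in>{0..<l}. c x = cs * exp (- g * x / a))"
    if "cs > cinf * g * lc / a" for l c
    using char L_pos[OF that] that by auto
  ultimately show ?thesis
    unfolding L_def[symmetric] by simp
qed

end
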